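(* Let $K$ be a compact Hausdorff topological space and $\kappa$ an infinite cardinal. If $C(K)$ admits an equivalent norm $|||\cdot|||$ such that $(C(K),|||\cdot|||)$ is $\mathrm{ASQ}_{<\kappa}$, then $C(K)$ contains an isomorphic copy of $c_0(\kappa)$.
   Context: $C(K)$ is the space of real-valued continuous functions on $K$ with the supremum norm. A Banach space $Z$ is $\mathrm{ASQ}_{<\kappa}$ if for every set $A\subset S_Z$ with $|A|<\kappa$ and every $\varepsilon>0$ there exists $y\in S_Z$ with $\|x\pm y\|\le 1+\varepsilon$ for all $x\in A$. *)

theory Defs
  imports "HOL-Analysis.Analysis" "HOL-Library.Equipollence"
begin

definition c0 :: "('k \<Rightarrow> real) set" where
  "c0 = {x. \<forall>e>0. finite {i. \<bar>x i\<bar> \<ge> e}}"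

definition c0_norm :: "('k \<Rightarrow> real) \<Rightarrow> real" where
  "c0_norm x = (SUP i. \<bar>x i\<bar>)"

definition equiv_norm :: "('z::real_normed_vector \<Rightarrow> real) \<Rightarrow> bool" where
  "equiv_norm N \<longleftrightarrow>
     (\<forall>x. N x = 0 \<longleftrightarrow> x = 0) \<and>
     (\<forall>x y. N (x + y) \<le> N x + N y) \<and>
     (\<forall>c x. N (scaleR c x) = \<bar>c\<bar> * N x) \<and>
     (\<exists>a b. 0 < a \<and> 0 < b \<and> (\<forall>x. a * norm x \<le> N x \<and> N x \<le> b * norm x))"

text \<open>(Z, N) is ASQ_{<kappa}, where kappa is the cardinality of the index set I.\<close>
definition ASQ_lt :: "('z::real_vector \<Rightarrow> real) \<Rightarrow> 'k set \<Rightarrow> bool" where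
  "ASQ_lt N I \<longleftrightarrow>
     (\<forall>A. A \<subseteq> {x. N x = 1} \<longrightarrow> A \<prec> I \<longrightarrow>
        (\<forall>e>0. \<exists>y. N y = 1 \<and> (\<forall>x\<in>A. N (x + y) \<le> 1 + e \<and> N (x - y) \<le> 1 + e)))"

definition contains_c0 :: "'k itself \<Rightarrow> 'z::real_normed_vector itself \<Rightarrow> bool" where
  "contains_c0 _ _ \<longleftrightarrow>
     (\<exists>T :: ('k \<Rightarrow> real) \<Rightarrow> 'z.
        (\<forall>x\<in>c0. \<forall>y\<in>c0. T (\<lambda>i. x i + y i) = T x + T y) \<and>
        (\<forall>c. \<forall>x\<in>c0. T (\<lambda>i. c * x i) = scaleR c (T x)) \<and>
        (\<exists>m M. 0 < m \<and> 0 < M \<and>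
           (\<forall>x\<in>c0. m * c0_norm x \<le> norm (T x) \<and> norm (T x) \<le> M * c0_norm x)))"

end

(*
  Let a * norm x \<le> N x \<le> b * norm x. Given an open set U, let M be the supremum of |f t| over
  N f = 1 and t \<in> U, and pick a unit vector e with |e t1| close to M at some t1 \<in> U. Wherever
  |e| is that close to M, every y with N (e \<plusminus> y) \<le> 1 + \<epsilon> has |e t \<plusminus> y t| \<le> (1 + \<epsilon>) M,
  so |y t| \<le> (1 + \<epsilon>) M - |e t| is small; this gives, inside U, a nonnegative bump whose
  support is "controlled" by e.
  By Zorn, take a maximal family of controlled bumps with disjoint supports. If it had fewer
  than \<kappa> members, ASQ would give y with N y = 1, almost square to all the controlling vectors,
  hence small on all supports; since norm y \<ge> 1/b, a controlled bump inside {|y| > 1/(2b)}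
  would extend the family. So there are \<kappa> disjointly supported normalised bumps u i, and
  x \<mapsto> \<Sum>i. x i * u i is an isometric copy of c_0(\<kappa>).
*)

theory Submission
  imports Defs
begin

lemma lepoll_if_not_lesspoll:
  assumes "\<not> A \<prec> B"
  shows "B \<lesssim> A"
proof (cases "A \<lesssim> B")
  case True
  with assms have "A \<approx> B"
    by (simp add: lesspoll_def)
  then show ?thesis
    by (meson eqpoll_sym eqpoll_imp_lepoll)
next
  case False
  then show ?thesis
    unfolding lepoll_def by (metis card_of_ordLess card_of_ordLeq ordLess_imp_ordLeq)
qed

lemma exists_maximal_pairwise_subset:
  obtains G where "G \<subseteq> S" and "pairwise R G"
    and "\<And>x. x \<in> S \<Longrightarrow> pairwise R (insert x G) \<Longrightarrow> x \<in> G"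
proof -
  let ?F = "{G. G \<subseteq> S \<and> pairwise R G}"
  have "\<forall>C\<in>chains ?F. \<Union>C \<in> ?F"
    by (auto simp: chains_def intro: pairwise_chain_Union)
  then obtain G where G: "G \<subseteq> S" "pairwise R G"
    and maximal: "\<And>X. X \<subseteq> S \<Longrightarrow> pairwise R X \<Longrightarrow> G \<subseteq> X \<Longrightarrow> X = G"
    by (metis (lifting) Zorn_Lemma mem_Collect_eq)
  show thesis
  proof (rule that[OF G])
    show "x \<in> G" if "x \<in> S" and "pairwise R (insert x G)" for x
      using maximal[of "insert x G"] G that by blast
  qed
qed

lemma ex_bcontfun_eq:
  fixes f :: "'a::topological_space \<Rightarrow> 'b::real_normed_vector"
  assumes "continuous_on UNIV f" and "\<And>t. norm (f t) \<le> B"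
  shows "\<exists>h :: 'a \<Rightarrow>\<^sub>C 'b. \<forall>t. h t = f t"
  using bcontfun_normI[OF assms] Bcontfun_inverse by metis

lemma c0_finite_ge: "x \<in> c0 \<Longrightarrow> 0 < e \<Longrightarrow> finite {i. e \<le> \<bar>x i\<bar>}"
  by (simp add: c0_def)

lemma c0_add:
  assumes "x \<in> c0" and "y \<in> c0"
  shows "(\<lambda>i. x i + y i) \<in> c0"
  unfolding c0_def
proof (intro CollectI allI impI)
  fix e :: real
  assume "0 < e"
  have "{i. e \<le> \<bar>x i + y i\<bar>} \<subseteq> {i. e / 2 \<le> \<bar>x i\<bar>} \<union> {i. e / 2 \<le> \<bar>y i\<bar>}"
    by auto
  moreover have "finite ({i. e / 2 \<le> \<bar>x i\<bar>} \<union> {i. e / 2 \<le> \<bar>y i\<bar>})"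
    using c0_finite_ge[OF assms(1), of "e / 2"] c0_finite_ge[OF assms(2), of "e / 2"] \<open>0 < e\<close>
    by simp
  ultimately show "finite {i. e \<le> \<bar>x i + y i\<bar>}"
    by (rule finite_subset)
qed

lemma c0_scale:
  assumes "x \<in> c0"
  shows "(\<lambda>i. c * x i) \<in> c0"
  unfolding c0_def
proof (intro CollectI allI impI)
  fix e :: real
  assume "0 < e"
  show "finite {i. e \<le> \<bar>c * x i\<bar>}"
  proof (cases "c = 0")
    case True
    then show ?thesis
      using \<open>0 < e\<close> by simp
  next
    case False
    have "{i. e \<le> \<bar>c * x i\<bar>} = {i. e / \<bar>c\<bar> \<le> \<bar>x i\<bar>}"
      using False by (auto simp: abs_mult field_simps mult.commute)
    then show ?thesis
      using c0_finite_ge[OF assms, of "e / \<bar>c\<bar>"] \<open>0 < e\<close> False by simp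
  qed
qed

lemma abs_le_c0_norm:
  assumes "x \<in> c0"
  shows "\<bar>x i\<bar> \<le> c0_norm x"
proof -
  have "finite {i. 1 \<le> \<bar>x i\<bar>}"
    using c0_finite_ge[OF assms] by simp
  then have "\<bar>x j\<bar> \<le> 1 + (\<Sum>k | 1 \<le> \<bar>x k\<bar>. \<bar>x k\<bar>)" for j
  proof (cases "1 \<le> \<bar>x j\<bar>")
    case True
    then have "\<bar>x j\<bar> \<le> (\<Sum>k | 1 \<le> \<bar>x k\<bar>. \<bar>x k\<bar>)"
      using \<open>finite {i. 1 \<le> \<bar>x i\<bar>}\<close> by (intro member_le_sum) auto
    then show ?thesis
      by simp
  next
    case False
    moreover have "0 \<le> (\<Sum>k | 1 \<le> \<bar>x k\<bar>. \<bar>x k\<bar>)"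
      by (simp add: sum_nonneg)
    ultimately show ?thesis
      by linarith
  qed
  then have "bdd_above (range (\<lambda>i. \<bar>x i\<bar>))"
    by (rule bdd_aboveI2)
  then show ?thesis
    unfolding c0_norm_def by (rule cSUP_upper[OF UNIV_I])
qed

locale disjointly_supported_unit_family =
  fixes u :: "'k \<Rightarrow> ('a::topological_space \<Rightarrow>\<^sub>C real)"
  assumes disjoint: "\<And>i j t. i \<noteq> j \<Longrightarrow> u i t = 0 \<or> u j t = 0"
    and norm_eq_1: "\<And>i. norm (u i) = 1"
begin

definition bump_sum :: "('k \<Rightarrow> real) \<Rightarrow> 'a \<Rightarrow> real" where
  "bump_sum x t = (\<Sum>i | u i t \<noteq> 0. x i * u i t)"

lemma bump_sum_single: "\<exists>i. (\<forall>j. j \<noteq> i \<longrightarrow> u j t = 0) \<and> bump_sum x t = x i * u i t"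
proof (cases "\<exists>i. u i t \<noteq> 0")
  case True
  then obtain i where "u i t \<noteq> 0"
    by blast
  then have "{j. u j t \<noteq> 0} = {i}"
    using disjoint by blast
  then show ?thesis
    using disjoint \<open>u i t \<noteq> 0\<close> by (auto simp: bump_sum_def)
qed (simp add: bump_sum_def)

lemma abs_apply_le_1: "\<bar>u i t\<bar> \<le> 1"
  using norm_bounded[of "u i" t] by (simp add: norm_eq_1)

lemma abs_bump_sum_le:
  assumes "\<And>i. \<bar>x i\<bar> \<le> r"
  shows "\<bar>bump_sum x t\<bar> \<le> r"
proof -
  obtain i where "bump_sum x t = x i * u i t"
    using bump_sum_single by blast
  moreover have "\<bar>x i\<bar> * \<bar>u i t\<bar> \<le> \<bar>x i\<bar>"
    using abs_apply_le_1[of i t] by (simp add: mult_left_le)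
  ultimately show ?thesis
    using assms[of i] by (simp add: abs_mult)
qed

lemma abs_bump_sum_minus_partial_sum_le:
  assumes "finite I" and "\<And>i. i \<notin> I \<Longrightarrow> \<bar>x i\<bar> \<le> r" and "0 \<le> r"
  shows "\<bar>bump_sum x t - (\<Sum>i\<in>I. x i * u i t)\<bar> \<le> r"
proof -
  obtain i where others: "\<forall>j. j \<noteq> i \<longrightarrow> u j t = 0" and sum_eq: "bump_sum x t = x i * u i t"
    using bump_sum_single by blast
  have "(\<Sum>j\<in>I. x j * u j t) = (\<Sum>j\<in>I. if j = i then x i * u i t else 0)"
    using others by (intro sum.cong) auto
  then have "bump_sum x t - (\<Sum>j\<in>I. x j * u j t) = (if i \<in> I then 0 else x i * u i t)"
    using \<open>finite I\<close> sum_eq by simp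
  moreover have "\<bar>x i * u i t\<bar> \<le> r" if "i \<notin> I"
    using assms(2)[OF that] abs_apply_le_1[of i t] mult_left_le[of "\<bar>u i t\<bar>" "\<bar>x i\<bar>"]
    by (simp add: abs_mult)
  ultimately show ?thesis
    using \<open>0 \<le> r\<close> by auto
qed

lemma continuous_on_bump_sum:
  assumes "x \<in> c0"
  shows "continuous_on UNIV (bump_sum x)"
proof (rule uniform_limit_theorem)
  define I where "I n = {i. 1 / real (Suc n) \<le> \<bar>x i\<bar>}" for n
  have finite_I: "finite (I n)" for n
    unfolding I_def by (rule c0_finite_ge[OF assms]) simp
  show "\<forall>\<^sub>F n in sequentially. continuous_on UNIV (\<lambda>t. \<Sum>i\<in>I n. x i * u i t)"
    by (intro always_eventually allI continuous_intros) auto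
  show "uniform_limit UNIV (\<lambda>n t. \<Sum>i\<in>I n. x i * u i t) (bump_sum x) sequentially"
  proof (rule uniform_limitI)
    fix e :: real
    assume "0 < e"
    then obtain n where n: "1 / real (Suc n) < e"
      using nat_approx_posE by blast
    have "\<forall>t\<in>UNIV. dist (\<Sum>i\<in>I m. x i * u i t) (bump_sum x t) < e" if "n \<le> m" for m
    proof
      fix t
      have "1 / real (Suc m) \<le> 1 / real (Suc n)"
        using that by (simp add: frac_le)
      moreover have "\<bar>bump_sum x t - (\<Sum>i\<in>I m. x i * u i t)\<bar> \<le> 1 / real (Suc m)"
        using finite_I by (intro abs_bump_sum_minus_partial_sum_le) (auto simp: I_def)
      ultimately show "dist (\<Sum>i\<in>I m. x i * u i t) (bump_sum x t) < e"
        using n by (simp add: dist_real_def abs_minus_commute)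
    qed
    then show "\<forall>\<^sub>F m in sequentially. \<forall>t\<in>UNIV. dist (\<Sum>i\<in>I m. x i * u i t) (bump_sum x t) < e"
      using eventually_ge_at_top[of n] by (rule eventually_mono[rotated])
  qed
qed simp

lemma abs_bump_sum_le_c0_norm: "x \<in> c0 \<Longrightarrow> \<bar>bump_sum x t\<bar> \<le> c0_norm x"
  by (meson abs_bump_sum_le abs_le_c0_norm)

lemma bump_sum_in_bcontfun: "x \<in> c0 \<Longrightarrow> bump_sum x \<in> bcontfun"
  using continuous_on_bump_sum abs_bump_sum_le_c0_norm by (intro bcontfun_normI) auto

definition bump_embedding :: "('k \<Rightarrow> real) \<Rightarrow> 'a \<Rightarrow>\<^sub>C real" where
  "bump_embedding x = Bcontfun (bump_sum x)"

lemma apply_bump_embedding: "x \<in> c0 \<Longrightarrow> apply_bcontfun (bump_embedding x) = bump_sum x"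
  by (simp add: bump_embedding_def Bcontfun_inverse bump_sum_in_bcontfun)

lemma bump_embedding_add:
  assumes "x \<in> c0" and "y \<in> c0"
  shows "bump_embedding (\<lambda>i. x i + y i) = bump_embedding x + bump_embedding y"
  using assms c0_add[OF assms]
  by (intro bcontfun_eqI) (simp add: apply_bump_embedding bump_sum_def distrib_right sum.distrib)

lemma bump_embedding_scale:
  assumes "x \<in> c0"
  shows "bump_embedding (\<lambda>i. c * x i) = c *\<^sub>R bump_embedding x"
  using assms c0_scale[OF assms]
  by (intro bcontfun_eqI) (simp add: apply_bump_embedding bump_sum_def sum_distrib_left mult.assoc)

lemma norm_bump_embedding:
  assumes "x \<in> c0"
  shows "norm (bump_embedding x) = c0_norm x"
proof (rule antisym)
  show "norm (bump_embedding x) \<le> c0_norm x"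
    using assms abs_bump_sum_le_c0_norm by (intro norm_bound) (simp add: apply_bump_embedding)
  have "\<bar>x i\<bar> \<le> norm (bump_embedding x)" for i
  proof -
    have "\<bar>x i * u i t\<bar> \<le> norm (bump_embedding x)" for t
    proof (cases "u i t = 0")
      case False
      then have "bump_sum x t = x i * u i t"
        using bump_sum_single disjoint by metis
      then show ?thesis
        using norm_bounded[of "bump_embedding x" t] assms by (simp add: apply_bump_embedding)
    qed simp
    then have "norm (x i *\<^sub>R u i) \<le> norm (bump_embedding x)"
      by (intro norm_bound) simp
    then show ?thesis
      by (simp add: norm_eq_1)
  qed
  then show "c0_norm x \<le> norm (bump_embedding x)"
    unfolding c0_norm_def by (rule cSUP_least[OF UNIV_not_empty])
qed

lemma contains_c0: "contains_c0 TYPE('k) TYPE('a \<Rightarrow>\<^sub>C real)"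
  unfolding contains_c0_def
  using bump_embedding_add bump_embedding_scale norm_bump_embedding
  by (intro exI[of _ bump_embedding] conjI exI[of _ 1]) auto

end

definition almost_squares_bounded ::
    "(('a::topological_space \<Rightarrow>\<^sub>C real) \<Rightarrow> real) \<Rightarrow> real \<Rightarrow> real \<Rightarrow> ('a \<Rightarrow>\<^sub>C real) \<Rightarrow> 'a set \<Rightarrow> bool"
  where "almost_squares_bounded N \<epsilon> \<delta> e S \<longleftrightarrow>
    N e = 1 \<and> (\<forall>y. N (e + y) \<le> 1 + \<epsilon> \<and> N (e - y) \<le> 1 + \<epsilon> \<longrightarrow> (\<forall>t\<in>S. \<bar>y t\<bar> \<le> \<delta>))"

lemma equiv_norm_scaleR: "equiv_norm N \<Longrightarrow> N (c *\<^sub>R x) = \<bar>c\<bar> * N x"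
  by (simp add: equiv_norm_def)

lemma equiv_norm_pos:
  assumes "equiv_norm N" and "x \<noteq> 0"
  shows "0 < N x"
proof -
  obtain a where "0 < a" and "a * norm x \<le> N x"
    using assms(1) unfolding equiv_norm_def by blast
  then show ?thesis
    using assms(2) by (smt (verit) mult_pos_pos zero_less_norm_iff)
qed

lemma abs_apply_le_equiv_norm:
  fixes f :: "'a::topological_space \<Rightarrow>\<^sub>C real"
  assumes "0 < a" and "\<And>x. a * norm x \<le> N x"
  shows "\<bar>f t\<bar> \<le> N f / a"
proof -
  have "a * \<bar>f t\<bar> \<le> a * norm f"
    using norm_bounded[of f t] assms(1) by (simp add: mult_left_mono)
  also have "\<dots> \<le> N f"
    by (rule assms(2))
  finally show ?thesis
    using assms(1) by (simp add: le_divide_eq mult.commute)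
qed

lemma exists_unit_vector_nonzero_at:
  fixes N :: "('a::topological_space \<Rightarrow>\<^sub>C real) \<Rightarrow> real"
  assumes N: "equiv_norm N"
  obtains e where "N e = 1" and "e t0 \<noteq> 0"
proof -
  define one where "one = (const_bcontfun 1 :: 'a \<Rightarrow>\<^sub>C real)"
  have "one t0 = 1"
    by (simp add: one_def)
  then have "one \<noteq> 0"
    by auto
  then have "0 < N one"
    by (rule equiv_norm_pos[OF N])
  then show thesis
    using \<open>one t0 = 1\<close> by (intro that[of "(1 / N one) *\<^sub>R one"]) (simp_all add: equiv_norm_scaleR[OF N])
qed

lemma exists_sup_abs_apply:
  fixes N :: "('a::topological_space \<Rightarrow>\<^sub>C real) \<Rightarrow> real"
  assumes N: "equiv_norm N" and a: "0 < a" "\<And>x. a * norm x \<le> N x" and "t0 \<in> U"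
  obtains M where "0 < M" and "M \<le> 1 / a" and "\<And>f t. t \<in> U \<Longrightarrow> \<bar>apply_bcontfun f t\<bar> \<le> M * N f"
    and "\<And>c. c < M \<Longrightarrow> \<exists>e :: 'a \<Rightarrow>\<^sub>C real. \<exists>t\<in>U. N e = 1 \<and> c < \<bar>e t\<bar>"
proof -
  define S where "S = {\<bar>apply_bcontfun f t\<bar> | f t. N f = 1 \<and> t \<in> U}"
  have S_le: "s \<le> 1 / a" if "s \<in> S" for s
  proof -
    obtain f :: "'a \<Rightarrow>\<^sub>C real" and t where "s = \<bar>f t\<bar>" and "N f = 1"
      using \<open>s \<in> S\<close> by (auto simp: S_def)
    then show ?thesis
      using abs_apply_le_equiv_norm[OF a, of f t] by simp
  qed
  then have "bdd_above S"
    by (rule bdd_aboveI)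
  obtain e :: "'a \<Rightarrow>\<^sub>C real" where "N e = 1" and "e t0 \<noteq> 0"
    using exists_unit_vector_nonzero_at[OF N] by blast
  then have e_in_S: "\<bar>e t0\<bar> \<in> S"
    using \<open>t0 \<in> U\<close> by (auto simp: S_def)
  show thesis
  proof (rule that)
    show "0 < Sup S"
      using cSup_upper[OF e_in_S \<open>bdd_above S\<close>] \<open>e t0 \<noteq> 0\<close> by simp
    show "Sup S \<le> 1 / a"
      using e_in_S S_le by (blast intro: cSup_least)
    show "\<bar>f t\<bar> \<le> Sup S * N f" if "t \<in> U" for f :: "'a \<Rightarrow>\<^sub>C real" and t
    proof (cases "f = 0")
      case False
      have "N ((1 / N f) *\<^sub>R f) = 1"
        using equiv_norm_pos[OF N False] by (simp add: equiv_norm_scaleR[OF N])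
      then have "\<bar>((1 / N f) *\<^sub>R f) t\<bar> \<in> S"
        using that unfolding S_def by blast
      then have "\<bar>f t\<bar> / N f \<le> Sup S"
        using cSup_upper[OF _ \<open>bdd_above S\<close>] equiv_norm_pos[OF N False] by (simp add: abs_mult)
      then show ?thesis
        using equiv_norm_pos[OF N False] by (simp add: divide_le_eq)
    qed (use equiv_norm_scaleR[OF N, of 0 f] in simp)
    show "\<exists>e :: 'a \<Rightarrow>\<^sub>C real. \<exists>t\<in>U. N e = 1 \<and> c < \<bar>e t\<bar>" if c: "c < Sup S" for c
    proof -
      obtain s where "s \<in> S" and "c < s"
        using less_cSupE[OF c] e_in_S by blast
      then show ?thesis
        by (auto simp: S_def)
    qed
  qed
qed

lemma exists_bump_almost_squares_bounded:
  fixes N :: "('a::topological_space \<Rightarrow>\<^sub>C real) \<Rightarrow> real" and g :: "'a \<Rightarrow>\<^sub>C real"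
  assumes N: "equiv_norm N" and a: "0 < a" "\<And>x. a * norm x \<le> N x"
    and "0 < g t0" and "0 < \<epsilon>" and "0 < \<eta>"
  obtains h :: "'a \<Rightarrow>\<^sub>C real" and e
  where "\<forall>t. 0 \<le> h t" and "\<exists>t. 0 < h t" and "\<forall>t. 0 < h t \<longrightarrow> 0 < g t"
    and "almost_squares_bounded N \<epsilon> (\<epsilon> / a + \<eta>) e {t. 0 < h t}"
proof -
  obtain M where "0 < M" and "M \<le> 1 / a"
    and abs_le: "\<And>f t. t \<in> {t. 0 < g t} \<Longrightarrow> \<bar>apply_bcontfun f t\<bar> \<le> M * N f"
    and approx: "\<And>c. c < M \<Longrightarrow> \<exists>e :: 'a \<Rightarrow>\<^sub>C real. \<exists>t\<in>{t. 0 < g t}. N e = 1 \<and> c < \<bar>e t\<bar>"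
    using exists_sup_abs_apply[OF N a, of t0 "{t. 0 < g t}"] \<open>0 < g t0\<close> by blast
  define c where "c = max 0 (M - \<eta>)"
  have "c < M"
    using \<open>0 < M\<close> \<open>0 < \<eta>\<close> by (simp add: c_def)
  then obtain e :: "'a \<Rightarrow>\<^sub>C real" and t1 where e: "N e = 1" "0 < g t1" "c < \<bar>e t1\<bar>"
    using approx by blast
  have "\<exists>h :: 'a \<Rightarrow>\<^sub>C real. \<forall>t. h t = max 0 (min (g t) (\<bar>e t\<bar> - c))"
  proof (rule ex_bcontfun_eq)
    show "continuous_on UNIV (\<lambda>t. max 0 (min (g t) (\<bar>e t\<bar> - c)))"
      by (intro continuous_intros) auto
    show "norm (max 0 (min (g t) (\<bar>e t\<bar> - c))) \<le> norm g" for t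
      using norm_bounded[of g t] by auto
  qed
  then obtain h :: "'a \<Rightarrow>\<^sub>C real" where h_apply: "\<And>t. h t = max 0 (min (g t) (\<bar>e t\<bar> - c))"
    by blast
  have "almost_squares_bounded N \<epsilon> (\<epsilon> / a + \<eta>) e {t. 0 < h t}"
    unfolding almost_squares_bounded_def
  proof (intro conjI allI impI ballI)
    show "N e = 1"
      by (rule e(1))
    fix y t
    assume y: "N (e + y) \<le> 1 + \<epsilon> \<and> N (e - y) \<le> 1 + \<epsilon>" and "t \<in> {t. 0 < h t}"
    then have "0 < g t" and "c < \<bar>e t\<bar>"
      by (auto simp: h_apply)
    have "\<bar>e t + y t\<bar> \<le> M * (1 + \<epsilon>)" and "\<bar>e t - y t\<bar> \<le> M * (1 + \<epsilon>)"
      using abs_le[of t "e + y"] abs_le[of t "e - y"] \<open>0 < g t\<close> y \<open>0 < M\<close>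
      by (auto intro: order_trans[OF _ mult_left_mono])
    \<comment> \<open>\<open>\<bar>e t\<bar> + \<bar>y t\<bar>\<close> is the larger of \<open>\<bar>e t + y t\<bar>\<close> and \<open>\<bar>e t - y t\<bar>\<close>\<close>
    then have "\<bar>y t\<bar> \<le> M * (1 + \<epsilon>) - \<bar>e t\<bar>"
      by linarith
    also have "\<dots> \<le> \<epsilon> * M + \<eta>"
      using \<open>c < \<bar>e t\<bar>\<close> by (simp add: c_def algebra_simps)
    also have "\<dots> \<le> \<epsilon> / a + \<eta>"
      using \<open>M \<le> 1 / a\<close> \<open>0 < \<epsilon>\<close> by (simp add: mult_left_mono divide_inverse)
    finally show "\<bar>y t\<bar> \<le> \<epsilon> / a + \<eta>" .
  qed
  moreover have "0 < h t1"
    using e by (simp add: h_apply)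
  ultimately show thesis
    by (intro that[of h e]) (auto simp: h_apply)
qed

lemma exists_bump_avoiding_family:
  fixes N :: "('a::topological_space \<Rightarrow>\<^sub>C real) \<Rightarrow> real" and G :: "('a \<Rightarrow>\<^sub>C real) set"
  assumes ASQ: "ASQ_lt N I" and "0 < \<epsilon>" and b: "0 < b" "\<And>x. N x \<le> b * norm x" and "b * \<delta> < 1"
    and "G \<prec> I" and bounded: "\<And>g. g \<in> G \<Longrightarrow> \<exists>e. almost_squares_bounded N \<epsilon> \<delta> e {t. 0 < g t}"
  obtains h :: "'a \<Rightarrow>\<^sub>C real" and t1 where "0 < h t1" and "\<And>g t. g \<in> G \<Longrightarrow> 0 < g t \<Longrightarrow> h t = 0"
proof -
  obtain E where E: "\<And>g. g \<in> G \<Longrightarrow> almost_squares_bounded N \<epsilon> \<delta> (E g) {t. 0 < g t}"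
    using bounded by metis
  have "E ` G \<subseteq> {x. N x = 1}"
    using E by (auto simp: almost_squares_bounded_def)
  moreover have "E ` G \<prec> I"
    using \<open>G \<prec> I\<close> image_lepoll lesspoll_trans1 by blast
  ultimately obtain y where "N y = 1" and y: "\<forall>x\<in>E ` G. N (x + y) \<le> 1 + \<epsilon> \<and> N (x - y) \<le> 1 + \<epsilon>"
    using ASQ \<open>0 < \<epsilon>\<close> unfolding ASQ_lt_def by blast
  have small: "\<bar>y t\<bar> \<le> \<delta>" if "g \<in> G" and "0 < g t" for g t
    using E[OF that(1)] y that unfolding almost_squares_bounded_def by blast
  have "\<exists>t1. \<delta> < \<bar>y t1\<bar>"
  proof (rule ccontr)
    assume "\<nexists>t1. \<delta> < \<bar>y t1\<bar>"
    then have "norm y \<le> \<delta>"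
      by (intro norm_bound) (auto simp: not_less)
    then have "N y \<le> b * \<delta>"
      using b by (meson mult_left_mono less_imp_le order_trans)
    then show False
      using \<open>N y = 1\<close> \<open>b * \<delta> < 1\<close> by linarith
  qed
  then obtain t1 where "\<delta> < \<bar>y t1\<bar>"
    by blast
  have "\<exists>h :: 'a \<Rightarrow>\<^sub>C real. \<forall>t. h t = max 0 (\<bar>y t\<bar> - \<delta>)"
  proof (rule ex_bcontfun_eq)
    show "continuous_on UNIV (\<lambda>t. max 0 (\<bar>y t\<bar> - \<delta>))"
      by (intro continuous_intros) auto
    show "norm (max 0 (\<bar>y t\<bar> - \<delta>)) \<le> norm y + \<bar>\<delta>\<bar>" for t
      using norm_bounded[of y t] by auto
  qed
  then obtain h :: "'a \<Rightarrow>\<^sub>C real" where h_apply: "\<And>t. h t = max 0 (\<bar>y t\<bar> - \<delta>)"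
    by blast
  show thesis
    using \<open>\<delta> < \<bar>y t1\<bar>\<close> small by (intro that[of h t1]) (auto simp: h_apply)
qed

definition controlled_bump ::
    "(('a::topological_space \<Rightarrow>\<^sub>C real) \<Rightarrow> real) \<Rightarrow> real \<Rightarrow> real \<Rightarrow> ('a \<Rightarrow>\<^sub>C real) \<Rightarrow> bool"
  where "controlled_bump N \<epsilon> \<delta> g \<longleftrightarrow> (\<forall>t. 0 \<le> g t) \<and> (\<exists>t. 0 < g t) \<and>
    (\<exists>e. almost_squares_bounded N \<epsilon> \<delta> e {t. 0 < g t})"

definition disjoint_supports :: "('a::topological_space \<Rightarrow>\<^sub>C real) \<Rightarrow> ('a \<Rightarrow>\<^sub>C real) \<Rightarrow> bool"
  where "disjoint_supports g h \<longleftrightarrow> (\<forall>t. g t = 0 \<or> h t = 0)"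

lemma disjoint_supports_nonnegI:
  fixes g h :: "'a::topological_space \<Rightarrow>\<^sub>C real"
  assumes "\<And>t. 0 \<le> g t" and "\<And>t. 0 \<le> h t" and "\<And>t. 0 < g t \<Longrightarrow> 0 < h t \<Longrightarrow> False"
  shows "disjoint_supports g h"
  unfolding disjoint_supports_def using assms by (smt (verit))

lemma exists_controlled_bump_disjoint_from_family:
  fixes N :: "('a::topological_space \<Rightarrow>\<^sub>C real) \<Rightarrow> real" and G :: "('a \<Rightarrow>\<^sub>C real) set"
  assumes N: "equiv_norm N" and ASQ: "ASQ_lt N I"
    and a: "0 < a" "\<And>x. a * norm x \<le> N x" and b: "0 < b" "\<And>x. N x \<le> b * norm x"
    and "0 < \<epsilon>" and "\<epsilon> / a < \<delta>" and "b * \<delta> < 1"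
    and "G \<prec> I" and G: "G \<subseteq> Collect (controlled_bump N \<epsilon> \<delta>)"
  obtains g where "controlled_bump N \<epsilon> \<delta> g" and "g \<notin> G"
    and "\<And>g'. g' \<in> G \<Longrightarrow> disjoint_supports g' g"
proof -
  have "\<exists>e. almost_squares_bounded N \<epsilon> \<delta> e {t. 0 < g t}" if "g \<in> G" for g
    using G that by (auto simp: controlled_bump_def)
  then obtain h :: "'a \<Rightarrow>\<^sub>C real" and t1
    where "0 < h t1" and h_vanishes: "\<And>g t. g \<in> G \<Longrightarrow> 0 < g t \<Longrightarrow> h t = 0"
    using exists_bump_avoiding_family[OF ASQ \<open>0 < \<epsilon>\<close> b \<open>b * \<delta> < 1\<close> \<open>G \<prec> I\<close>] by blast
  have "0 < \<delta> - \<epsilon> / a"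
    using \<open>\<epsilon> / a < \<delta>\<close> by simp
  then obtain g :: "'a \<Rightarrow>\<^sub>C real" and e where "\<forall>t. 0 \<le> g t" and "\<exists>t. 0 < g t"
    and below_h: "\<forall>t. 0 < g t \<longrightarrow> 0 < h t"
    and "almost_squares_bounded N \<epsilon> (\<epsilon> / a + (\<delta> - \<epsilon> / a)) e {t. 0 < g t}"
    by (rule exists_bump_almost_squares_bounded[OF N a \<open>0 < h t1\<close> \<open>0 < \<epsilon>\<close>])
  then have "controlled_bump N \<epsilon> \<delta> g"
    unfolding controlled_bump_def by auto
  have disjoint: "disjoint_supports g' g" if "g' \<in> G" for g'
  proof (rule disjoint_supports_nonnegI)
    show "0 \<le> g' t" for t
      using G that by (auto simp: controlled_bump_def)
    show "0 \<le> g t" for t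
      using \<open>\<forall>t. 0 \<le> g t\<close> by blast
    show False if "0 < g' t" and "0 < g t" for t
      using h_vanishes[OF \<open>g' \<in> G\<close> that(1)] below_h that(2) by fastforce
  qed
  moreover have "g \<notin> G"
  proof
    assume "g \<in> G"
    then have "disjoint_supports g g"
      by (rule disjoint)
    then show False
      using \<open>\<exists>t. 0 < g t\<close> by (auto simp: disjoint_supports_def)
  qed
  ultimately show thesis
    using \<open>controlled_bump N \<epsilon> \<delta> g\<close> that by blast
qed

lemma exists_disjointly_supported_family:
  fixes N :: "('a::topological_space \<Rightarrow>\<^sub>C real) \<Rightarrow> real"
  assumes N: "equiv_norm N" and ASQ: "ASQ_lt N (UNIV :: 'k set)"
  obtains v :: "'k \<Rightarrow> ('a \<Rightarrow>\<^sub>C real)"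
  where "\<And>i. v i \<noteq> 0" and "\<And>i j. i \<noteq> j \<Longrightarrow> disjoint_supports (v i) (v j)"
proof -
  obtain a b where a: "0 < a" "\<And>x. a * norm x \<le> N x" and b: "0 < b" "\<And>x. N x \<le> b * norm x"
    using N unfolding equiv_norm_def by blast
  define \<epsilon> where "\<epsilon> = a / (4 * b)"
  define \<delta> where "\<delta> = 1 / (2 * b)"
  have "0 < \<epsilon>" and "\<epsilon> / a < \<delta>" and "b * \<delta> < 1"
    using a b by (simp_all add: \<epsilon>_def \<delta>_def field_simps)
  obtain G where G: "G \<subseteq> Collect (controlled_bump N \<epsilon> \<delta>)" "pairwise disjoint_supports G"
    and maximal: "\<And>g. g \<in> Collect (controlled_bump N \<epsilon> \<delta>) \<Longrightarrow>
      pairwise disjoint_supports (insert g G) \<Longrightarrow> g \<in> G"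
    using exists_maximal_pairwise_subset[of "Collect (controlled_bump N \<epsilon> \<delta>)" disjoint_supports]
    by blast
  have "\<not> G \<prec> (UNIV :: 'k set)"
  proof
    assume "G \<prec> (UNIV :: 'k set)"
    then obtain g where "controlled_bump N \<epsilon> \<delta> g" and "g \<notin> G"
      and "\<And>g'. g' \<in> G \<Longrightarrow> disjoint_supports g' g"
      using exists_controlled_bump_disjoint_from_family[OF N ASQ a b \<open>0 < \<epsilon>\<close> \<open>\<epsilon> / a < \<delta>\<close>
          \<open>b * \<delta> < 1\<close> _ G(1)]
      by blast
    moreover from this(3) have "pairwise disjoint_supports (insert g G)"
      using G(2) by (auto simp: pairwise_insert disjoint_supports_def)
    ultimately show False
      using maximal by blast
  qed
  then obtain v :: "'k \<Rightarrow> ('a \<Rightarrow>\<^sub>C real)" where "inj v" and "range v \<subseteq> G"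
    using lepoll_if_not_lesspoll unfolding lepoll_def by blast
  show thesis
  proof (rule that)
    show "v i \<noteq> 0" for i
    proof
      have "controlled_bump N \<epsilon> \<delta> (v i)"
        using \<open>range v \<subseteq> G\<close> G(1) by blast
      moreover assume "v i = 0"
      ultimately show False
        by (simp add: controlled_bump_def)
    qed
    show "disjoint_supports (v i) (v j)" if "i \<noteq> j" for i j
      using \<open>inj v\<close> \<open>range v \<subseteq> G\<close> G(2) that unfolding pairwise_def inj_def by blast
  qed
qed

theorem theorem3p3:
  fixes N :: "('a::t2_space \<Rightarrow>\<^sub>C real) \<Rightarrow> real"
  assumes "compact (UNIV :: 'a set)"
    and "infinite (UNIV :: 'k set)"
    and "equiv_norm N"
    and "ASQ_lt N (UNIV :: 'k set)"
  shows "contains_c0 TYPE('k) TYPE('a \<Rightarrow>\<^sub>C real)"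
proof -
  obtain v :: "'k \<Rightarrow> ('a \<Rightarrow>\<^sub>C real)"
    where "\<And>i. v i \<noteq> 0" and "\<And>i j. i \<noteq> j \<Longrightarrow> disjoint_supports (v i) (v j)"
    using exists_disjointly_supported_family[OF assms(3,4)] by blast
  then interpret disjointly_supported_unit_family "\<lambda>i. (1 / norm (v i)) *\<^sub>R v i"
    by unfold_locales (auto simp: disjoint_supports_def)
  show ?thesis
    by (rule contains_c0)
qed

end
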